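(* If $\phi\in\mathcal{I}$, then $\lim_{r\to\infty}\frac{\phi(r)}{r^2}=\infty$.
   Context: The class $\mathcal{I}$: $\phi:[0,\infty)\to(0,\infty)$ is twice continuously differentiable, extended by $\phi(z)=\phi(|z|)$, with $\Delta\phi>0$, and there exist a positive differentiable radial $\tau$ and a constant $C>0$ with $\tau(z)=C$ for $|z|<1$ and $C^{-1}(\Delta\phi(|z|))^{-1/2}\le\tau(z)\le C(\Delta\phi(|z|))^{-1/2}$ for $|z|\ge1$; $\tau(z)\to0$ as $|z|\to\infty$, $\tau'(r)\to0$, and either $\tau(r)r^{c}$ increases for large $r$ for some $c>0$ or $\lim_{r\to\infty}\tau'(r)\log\frac1{\tau(r)}=0$. *)

theory Defs
  imports "HOL-Analysis.Analysis"
begin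

text \<open>Laplacian of the radial extension z \<mapsto> phi(|z|) on the plane, written in polar
  form at radius r > 0, given the first and second derivatives phi1, phi2 of the profile.\<close>
definition radial_lap :: "(real \<Rightarrow> real) \<Rightarrow> (real \<Rightarrow> real) \<Rightarrow> real \<Rightarrow> real" where
  "radial_lap phi1 phi2 r = phi2 r + phi1 r / r"

text \<open>The class I. phi is the radial profile on [0,oo), tau the radial profile of the
  radial function tau(z) = tau(|z|); tau' is the radial derivative.\<close>
definition class_I :: "(real \<Rightarrow> real) \<Rightarrow> bool" where
  "class_I phi \<longleftrightarrow>
     (\<forall>r\<ge>0. phi r > 0) \<and>
     (\<exists>phi1 phi2.
        (\<forall>r\<ge>0. (phi has_real_derivative phi1 r) (at r within {0..}) \<and>
                (phi1 has_real_derivative phi2 r) (at r within {0..})) \<and>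
        continuous_on {0..} phi2 \<and>
        (\<forall>r>0. radial_lap phi1 phi2 r > 0) \<and>
        (\<exists>tau C. C > 0 \<and>
           (\<forall>r\<ge>0. tau r > 0) \<and>
           (\<forall>r>0. tau differentiable (at r)) \<and>
           (\<forall>r. 0 \<le> r \<and> r < 1 \<longrightarrow> tau r = C) \<and>
           (\<forall>r\<ge>1. inverse C * (radial_lap phi1 phi2 r) powr (-1/2) \<le> tau r \<and>
                   tau r \<le> C * (radial_lap phi1 phi2 r) powr (-1/2)) \<and>
           (tau \<longlongrightarrow> 0) at_top \<and>
           (deriv tau \<longlongrightarrow> 0) at_top \<and>
           ((\<exists>c>0. \<exists>R. \<forall>x y. R \<le> x \<longrightarrow> x \<le> y \<longrightarrow>
                 tau x * x powr c \<le> tau y * y powr c) \<or>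
            ((\<lambda>r. deriv tau r * ln (1 / tau r)) \<longlongrightarrow> 0) at_top)))"

end

theory Submission
  imports Defs
begin

text \<open>Since \<open>\<tau> \<ge> C\<^sup>-\<^sup>1 (\<Delta>\<phi>)\<^sup>-\<^sup>1\<^sup>/\<^sup>2\<close> and \<open>\<tau> \<rightarrow> 0\<close>, the Laplacian \<open>\<Delta>\<phi> = \<phi>'' + \<phi>'/r\<close> tends to infinity.
  In polar form \<open>\<Delta>\<phi> = 2 (r\<phi>')' / (r\<^sup>2)'\<close>, so l'Hopital's rule for an infinite limit gives
  \<open>r\<phi>'/r\<^sup>2 = \<phi>'/r \<rightarrow> \<infinity>\<close>; as \<open>\<phi>'/r = 2 \<phi>'/(r\<^sup>2)'\<close>, a second application gives \<open>\<phi>/r\<^sup>2 \<rightarrow> \<infinity>\<close>.\<close>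

lemma filterlim_at_top_if_powr_neg_le_null:
  fixes f g :: "'a \<Rightarrow> real"
  assumes a: "a > 0"
    and pos: "eventually (\<lambda>x. f x > 0) F"
    and le: "eventually (\<lambda>x. f x powr (- a) \<le> g x) F"
    and g: "(g \<longlongrightarrow> 0) F"
  shows "filterlim f at_top F"
  unfolding filterlim_at_top_gt[where c = 0]
proof (intro allI impI)
  fix Z :: real
  assume Z: "Z > 0"
  have "eventually (\<lambda>x. g x < Z powr (- a)) F"
    using g Z by (intro order_tendstoD) auto
  with pos le show "eventually (\<lambda>x. Z \<le> f x) F"
  proof eventually_elim
    case (elim x)
    show ?case
    proof (rule ccontr)
      assume "\<not> Z \<le> f x"
      then have "Z powr (- a) \<le> f x powr (- a)"
        using elim a by (intro powr_mono2') auto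
      with elim show False by simp
    qed
  qed
qed

lemma lhopital_at_top_to_at_top:
  fixes f g f' g' :: "real \<Rightarrow> real"
  assumes g: "filterlim g at_top at_top"
    and g'_pos: "eventually (\<lambda>x. g' x > 0) at_top"
    and Df: "eventually (\<lambda>x. (f has_real_derivative f' x) (at x)) at_top"
    and Dg: "eventually (\<lambda>x. (g has_real_derivative g' x) (at x)) at_top"
    and lim: "filterlim (\<lambda>x. f' x / g' x) at_top at_top"
  shows "filterlim (\<lambda>x. f x / g x) at_top at_top"
  unfolding filterlim_at_top
proof
  fix Z :: real
  define h where "h x = f x - (Z + 1) * g x" for x
  have "eventually (\<lambda>x. g' x > 0 \<and> (f has_real_derivative f' x) (at x) \<and>
      (g has_real_derivative g' x) (at x) \<and> Z + 1 \<le> f' x / g' x) at_top"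
    using g'_pos Df Dg lim[unfolded filterlim_at_top, rule_format, of "Z + 1"]
    by eventually_elim auto
  then obtain R where R: "\<And>x. x \<ge> R \<Longrightarrow> g' x > 0 \<and> (f has_real_derivative f' x) (at x) \<and>
      (g has_real_derivative g' x) (at x) \<and> Z + 1 \<le> f' x / g' x"
    unfolding eventually_at_top_linorder by blast
  have h_mono: "h R \<le> h x" if "R \<le> x" for x
  proof (rule DERIV_nonneg_imp_nondecreasing[OF that])
    fix y
    assume "R \<le> y"
    then have Ry: "g' y > 0" "(f has_real_derivative f' y) (at y)"
      "(g has_real_derivative g' y) (at y)" "Z + 1 \<le> f' y / g' y"
      using R by auto
    have "(h has_real_derivative f' y - (Z + 1) * g' y) (at y)"
      unfolding h_def[abs_def] using Ry by (auto intro!: derivative_eq_intros)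
    moreover have "f' y - (Z + 1) * g' y \<ge> 0"
      using Ry by (simp add: pos_le_divide_eq)
    ultimately show "\<exists>d. (h has_real_derivative d) (at y) \<and> d \<ge> 0" by blast
  qed
  have "((\<lambda>x. h R / g x) \<longlongrightarrow> 0) at_top"
    using g by (intro tendsto_divide_0 filterlim_at_top_imp_at_infinity) auto
  then have "eventually (\<lambda>x. h R / g x > -1) at_top"
    by (intro order_tendstoD) auto
  with g[unfolded filterlim_at_top_dense, rule_format, of 0] eventually_ge_at_top[of R]
  show "eventually (\<lambda>x. Z \<le> f x / g x) at_top"
  proof eventually_elim
    case (elim x)
    then have "f x / g x = h x / g x + (Z + 1)"
      by (simp add: h_def field_simps)
    also have "\<dots> \<ge> h R / g x + (Z + 1)"
      using h_mono[of x] elim by (simp add: divide_right_mono)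
    finally show ?case using elim by linarith
  qed
qed

lemma filterlim_at_top_half:
  fixes u :: "'a \<Rightarrow> real"
  assumes "filterlim u at_top F"
  shows "filterlim (\<lambda>x. u x / 2) at_top F"
  using filterlim_tendsto_pos_mult_at_top[OF tendsto_const[of "1/2"] _ assms] by simp

lemma filterlim_divide_square_at_top_if_radial_lap_at_top:
  fixes phi phi1 phi2 :: "real \<Rightarrow> real"
  assumes d1: "\<And>r. r > 0 \<Longrightarrow> (phi has_real_derivative phi1 r) (at r)"
    and d2: "\<And>r. r > 0 \<Longrightarrow> (phi1 has_real_derivative phi2 r) (at r)"
    and lap: "filterlim (radial_lap phi1 phi2) at_top at_top"
  shows "filterlim (\<lambda>r. phi r / r\<^sup>2) at_top at_top"
proof -
  have square: "filterlim (\<lambda>r::real. r\<^sup>2) at_top at_top"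
    by (intro filterlim_pow_at_top filterlim_ident) simp
  have D_square: "eventually (\<lambda>r. ((\<lambda>r. r\<^sup>2) has_real_derivative 2 * r) (at r)) at_top"
    by (intro always_eventually allI derivative_eq_intros) auto
  have deriv_square_pos: "eventually (\<lambda>r::real. 2 * r > 0) at_top"
    using eventually_gt_at_top[of 0] by eventually_elim simp
  have D_r_phi1: "eventually (\<lambda>r. ((\<lambda>r. r * phi1 r) has_real_derivative phi1 r + r * phi2 r) (at r)) at_top"
    using eventually_gt_at_top[of 0]
    by eventually_elim (auto intro!: derivative_eq_intros d2)
  have D_phi: "eventually (\<lambda>r. (phi has_real_derivative phi1 r) (at r)) at_top"
    using eventually_gt_at_top[of 0] by eventually_elim (rule d1)
  have "eventually (\<lambda>r. radial_lap phi1 phi2 r / 2 = (phi1 r + r * phi2 r) / (2 * r)) at_top"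
    using eventually_gt_at_top[of 0] by eventually_elim (simp add: radial_lap_def field_simps)
  from filterlim_cong[OF refl refl this] filterlim_at_top_half[OF lap]
  have "filterlim (\<lambda>r. (phi1 r + r * phi2 r) / (2 * r)) at_top at_top"
    by simp
  from lhopital_at_top_to_at_top[OF square deriv_square_pos D_r_phi1 D_square this]
  have "filterlim (\<lambda>r. (r * phi1 r) / r\<^sup>2) at_top at_top" .
  moreover have "eventually (\<lambda>r. (r * phi1 r) / r\<^sup>2 = phi1 r / r) at_top"
    using eventually_gt_at_top[of 0] by eventually_elim (simp add: power2_eq_square)
  ultimately have "filterlim (\<lambda>r. phi1 r / r) at_top at_top"
    by (simp add: filterlim_cong[OF refl refl])
  from filterlim_at_top_half[OF this]
  have "filterlim (\<lambda>r. phi1 r / (2 * r)) at_top at_top"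
    by (simp add: mult.commute)
  from lhopital_at_top_to_at_top[OF square deriv_square_pos D_phi D_square this]
  show ?thesis .
qed

theorem lemma2p6:
  fixes phi :: "real \<Rightarrow> real"
  assumes "class_I phi"
  shows "filterlim (\<lambda>r. phi r / r\<^sup>2) at_top at_top"
proof -
  obtain phi1 phi2 tau C where
    D: "\<forall>r\<ge>0. (phi has_real_derivative phi1 r) (at r within {0..}) \<and>
                (phi1 has_real_derivative phi2 r) (at r within {0..})"
    and lap_pos: "\<forall>r>0. radial_lap phi1 phi2 r > 0"
    and C: "C > 0"
    and tau_bound: "\<forall>r\<ge>1. inverse C * (radial_lap phi1 phi2 r) powr (-1/2) \<le> tau r \<and>
                   tau r \<le> C * (radial_lap phi1 phi2 r) powr (-1/2)"
    and tau_lim: "(tau \<longlongrightarrow> 0) at_top"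
    using assms unfolding class_I_def by (elim conjE exE) (rule that; assumption)
  have D_at: "(phi has_real_derivative phi1 r) (at r) \<and> (phi1 has_real_derivative phi2 r) (at r)"
    if "r > 0" for r
    using D[rule_format, of r] that at_within_interior[of r "{0..}"] by simp
  have "eventually (\<lambda>r. radial_lap phi1 phi2 r > 0) at_top"
    using eventually_gt_at_top[of 0] by eventually_elim (use lap_pos in blast)
  moreover have "eventually (\<lambda>r. radial_lap phi1 phi2 r powr (-1/2) \<le> C * tau r) at_top"
    using eventually_ge_at_top[of 1]
  proof eventually_elim
    case (elim r)
    with tau_bound have "inverse C * radial_lap phi1 phi2 r powr (-1/2) \<le> tau r" by blast
    with C show ?case by (simp add: field_simps)
  qed
  ultimately have "filterlim (radial_lap phi1 phi2) at_top at_top"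
    using tendsto_mult_right_zero[OF tau_lim, of C]
    by (intro filterlim_at_top_if_powr_neg_le_null[of "1/2"]) simp_all
  then show ?thesis
    using D_at by (intro filterlim_divide_square_at_top_if_radial_lap_at_top) simp_all
qed

end
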